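(* Let $n\ge 1$ and let $\mathcal{C}_2\subseteq\mathbb{F}_2^n$ be a binary linear code. Let $\tilde{\mathcal{C}}_3=\{x\in\mathbb{F}_2^n:\sum_{i=1}^n x_i\equiv 0 \pmod 2\}$ and $\overline{\mathcal{C}}_3=\{y\in\mathbb{F}_2^n:\sum_{i=1}^n y_i\equiv 1 \pmod 2\}$, and define the code $\mathcal{C}\subseteq\mathbb{F}_2^{3n}$ by $$\mathcal{C}=\{(0,\dots,0,\,a,\,x): a\in\mathcal{C}_2,\ x\in\tilde{\mathcal{C}}_3\}\ \cup\ \{(1,\dots,1,\,a,\,y): a\in\mathcal{C}_2,\ y\in\overline{\mathcal{C}}_3\},$$ where each codeword is written as $(c_1,c_2,c_3)$ with $c_1,c_2,c_3\in\mathbb{F}_2^n$ (so the first block $c_1$ lies in the repetition code $\{(0,\dots,0),(1,\dots,1)\}$). Define $$\Gamma_{C^\star}=\{c_1+2c_2+4c_3+8z:\ (c_1,c_2,c_3)\in\mathcal{C},\ z\in\mathbb{Z}^n\}\subseteq\mathbb{R}^n,$$ where vectors of $\mathbb{F}_2^n$ are identified with vectors in $\{0,1\}^n\subseteq\mathbb{R}^n$ and the operations are real addition and scalar multiplication. Then $\Gamma_{C^\star}$ is a lattice if and only if $\mathcal{C}_2$ is self-orthogonal and contains the all-ones vector $(1,\dots,1)$.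
   Context: A lattice in $\mathbb{R}^n$ is the set of all integer linear combinations of a set of linearly independent vectors of $\mathbb{R}^n$. For $c,\tilde c\in\mathbb{F}_2^n$, $\langle c,\tilde c\rangle=\sum_{i=1}^n c_i\tilde c_i \bmod 2$, and $\mathcal{C}^\perp=\{c\in\mathbb{F}_2^n:\langle c,\tilde c\rangle=0 \text{ for all }\tilde c\in\mathcal{C}\}$. A binary code $\mathcal{C}$ is self-orthogonal if $\mathcal{C}\subseteq\mathcal{C}^\perp$. (Here $\mathcal{C}_2$ being linear is equivalent to the code $\mathcal{C}$ above being linear.) *)

theory Defs
  imports "HOL-Analysis.Analysis" "HOL-Library.Z2"
begin

text \<open>Vectors of F_2^n are modelled as bit^'n (bit = field F_2 from HOL-Library.Z2),
  vectors of R^n as real^'n; the dimension n is the (finite, nonempty) index type 'n.\<close>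

definition binary_linear_code :: "(bit^'n) set \<Rightarrow> bool" where
  "binary_linear_code C \<longleftrightarrow> 0 \<in> C \<and> (\<forall>a\<in>C. \<forall>b\<in>C. \<forall>s::bit. s *s a + b \<in> C)"

definition binary_inner :: "bit^'n \<Rightarrow> bit^'n \<Rightarrow> bit" where
  "binary_inner c d = (\<Sum>i\<in>UNIV. c$i * d$i)"

definition binary_dual :: "(bit^'n) set \<Rightarrow> (bit^'n) set" where
  "binary_dual C = {c. \<forall>d\<in>C. binary_inner c d = 0}"

definition self_orthogonal :: "(bit^'n) set \<Rightarrow> bool" where
  "self_orthogonal C \<longleftrightarrow> C \<subseteq> binary_dual C"

definition is_lattice :: "(real^'n) set \<Rightarrow> bool" where
  "is_lattice L \<longleftrightarrow> (\<exists>B. independent B \<and> finite B \<and>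
      L = {(\<Sum>b\<in>B. of_int (k b) *\<^sub>R b) | k. True})"

definition even_weight :: "(bit^'n) set" where
  "even_weight = {x. (\<Sum>i\<in>UNIV. x$i) = 0}"

definition odd_weight :: "(bit^'n) set" where
  "odd_weight = {y. (\<Sum>i\<in>UNIV. y$i) = 1}"

definition code_C :: "(bit^'n) set \<Rightarrow> ((bit^'n) \<times> (bit^'n) \<times> (bit^'n)) set" where
  "code_C C2 = {(0 :: bit^'n, a, x) | a x. a \<in> C2 \<and> x \<in> even_weight}
             \<union> {((\<chi> i. (1::bit)), a, y) | a y. a \<in> C2 \<and> y \<in> odd_weight}"

definition Gamma_Cstar :: "((bit^'n) \<times> (bit^'n) \<times> (bit^'n)) set \<Rightarrow> (real^'n) set" where
  "Gamma_Cstar C = {(\<chi> i. of_bit (c1$i) + 2 * of_bit (c2$i) + 4 * of_bit (c3$i) + 8 * of_int (z$i))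
              | c1 c2 c3 z. (c1, c2, c3) \<in> C \<and> (z :: int^'n) \<in> UNIV}"

end

theory Submission
  imports Defs
begin

(* Every coordinate of a point of Gamma is c1 + 2 c2 + 4 c3 + 8 z with unique binary digits and
   integer part, so adding two points of Gamma amounts to adding the digit vectors with carries:
   the digits of the sum are c1 + d1, c2 + d2 + c1 d1 and c3 + d3 + maj(c2, d2, c1 d1), where
   maj(a, b, c) = ab + ac + bc is the carry of a full adder.  As c1 and d1 are constant vectors
   t 1, the parity of maj(a, b, t 1) is <a, b> + t (wt a + wt b), which vanishes when C2 is
   self-orthogonal, and the middle digit stays in C2 when 1 is in C2.  Since Gamma lies in Z^n
   and is invariant under 8 Z^n, closure under addition makes it a subgroup of Z^n, and every
   subgroup of Z^n is a lattice (induction on the coordinates, splitting off a vector whose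
   coordinate is the least positive one).  Conversely, doubling (1, 0, e_i) produces the middle
   digit 1, and adding (0, a, 0) to (0, b, 0) produces the last digit a * b, whose parity must
   then be even. *)

declare add_bit_eq_xor [simp del] mult_bit_eq_and [simp del]

section \<open>Subgroups of the integer lattice\<close>

definition int_combinations :: "(real^'n) set \<Rightarrow> (real^'n) set" where
  "int_combinations B = {(\<Sum>b\<in>B. of_int (k b) *\<^sub>R b) | k. True}"

lemma is_lattice_iff_int_combinations:
  "is_lattice L \<longleftrightarrow> (\<exists>B. independent B \<and> finite B \<and> L = int_combinations B)"
  unfolding is_lattice_def int_combinations_def ..

lemma int_combinations_add:
  assumes "x \<in> int_combinations B" "y \<in> int_combinations B"
  shows "x + y \<in> int_combinations B"
proof -
  obtain k l where "x = (\<Sum>b\<in>B. of_int (k b) *\<^sub>R b)" "y = (\<Sum>b\<in>B. of_int (l b) *\<^sub>R b)"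
    using assms unfolding int_combinations_def by blast
  then have "x + y = (\<Sum>b\<in>B. of_int (k b + l b) *\<^sub>R b)"
    by (simp add: sum.distrib scaleR_add_left)
  then show ?thesis
    unfolding int_combinations_def by (auto intro!: exI[of _ "\<lambda>b. k b + l b"])
qed

lemma lattice_add_closed: "is_lattice L \<Longrightarrow> x \<in> L \<Longrightarrow> y \<in> L \<Longrightarrow> x + y \<in> L"
  unfolding is_lattice_iff_int_combinations using int_combinations_add by blast

lemma mem_int_combinations:
  assumes "finite B" "u \<in> B"
  shows "u \<in> int_combinations B"
proof -
  have "(\<Sum>b\<in>B. of_int (if b = u then 1 else 0) *\<^sub>R b) = (\<Sum>b\<in>B. if b = u then b else 0)"
    by (rule sum.cong) auto
  also have "\<dots> = u"
    using assms by simp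
  finally show ?thesis
    unfolding int_combinations_def by (auto intro!: exI[of _ "\<lambda>b. if b = u then 1 else 0"])
qed

lemma int_combinations_insert:
  fixes B :: "(real^'n) set"
  assumes "finite B" "u \<notin> B"
  shows "int_combinations (insert u B) = {of_int m *\<^sub>R u + v | m v. v \<in> int_combinations B}"
proof -
  have "(\<Sum>b\<in>insert u B. of_int (k b) *\<^sub>R b) = of_int (k u) *\<^sub>R u + (\<Sum>b\<in>B. of_int (k b) *\<^sub>R b)"
    for k :: "real^'n \<Rightarrow> int"
    using assms by simp
  moreover have "(\<Sum>b\<in>B. of_int ((k(u := m)) b) *\<^sub>R b) = (\<Sum>b\<in>B. of_int (k b) *\<^sub>R b)"
    for k :: "real^'n \<Rightarrow> int" and m
    using assms(2) by (intro sum.cong) auto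
  ultimately show ?thesis
    unfolding int_combinations_def by (auto 4 3 intro: exI[of _ "k(u := m)" for k m])
qed

definition additive_subgroup :: "'a::ab_group_add set \<Rightarrow> bool" where
  "additive_subgroup S \<longleftrightarrow> 0 \<in> S \<and> (\<forall>x\<in>S. \<forall>y\<in>S. x - y \<in> S)"

lemma additive_subgroup_uminus: "additive_subgroup S \<Longrightarrow> x \<in> S \<Longrightarrow> - x \<in> S"
  unfolding additive_subgroup_def by (metis diff_0)

lemma additive_subgroup_add: "additive_subgroup S \<Longrightarrow> x \<in> S \<Longrightarrow> y \<in> S \<Longrightarrow> x + y \<in> S"
  using additive_subgroup_uminus[of S y] unfolding additive_subgroup_def
  by (metis diff_minus_eq_add)

lemma additive_subgroup_scaleR_int:
  fixes S :: "'a::real_vector set"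
  assumes "additive_subgroup S" "x \<in> S"
  shows "of_int k *\<^sub>R x \<in> S"
proof -
  have nat_multiple: "of_nat n *\<^sub>R x \<in> S" for n
  proof (induction n)
    case 0
    then show ?case using assms(1) by (simp add: additive_subgroup_def)
  next
    case (Suc n)
    have "of_nat (Suc n) *\<^sub>R x = of_nat n *\<^sub>R x + x"
      by (simp add: scaleR_add_left)
    then show ?case
      using additive_subgroup_add[OF assms(1) Suc.IH assms(2)] by simp
  qed
  show ?thesis
  proof (cases "0 \<le> k")
    case True
    then show ?thesis using nat_multiple[of "nat k"] by simp
  next
    case False
    then show ?thesis
      using additive_subgroup_uminus[OF assms(1) nat_multiple[of "nat (- k)"]] by simp
  qed
qed

lemma least_positive_coordinate:
  fixes S :: "(real^'n) set"
  assumes "\<forall>w\<in>S. w$j \<in> \<int>" "v \<in> S" "0 < v$j"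
  shows "\<exists>u\<in>S. 0 < u$j \<and> (\<forall>w\<in>S. 0 < w$j \<longrightarrow> u$j \<le> w$j)"
proof -
  obtain u where u: "u \<in> S" "0 < u$j"
    and least: "\<And>w. w \<in> S \<and> 0 < w$j \<Longrightarrow> nat \<lfloor>u$j\<rfloor> \<le> nat \<lfloor>w$j\<rfloor>"
    using ex_has_least_nat[of "\<lambda>w. w \<in> S \<and> 0 < w$j" v "\<lambda>w. nat \<lfloor>w$j\<rfloor>"] assms(2,3) by blast
  have "u$j \<le> w$j" if w: "w \<in> S" "0 < w$j" for w
  proof -
    obtain a where a: "u$j = of_int a"
      using assms(1) u(1) by (auto elim: Ints_cases)
    obtain b where b: "w$j = of_int b"
      using assms(1) w(1) by (auto elim: Ints_cases)
    have "nat a \<le> nat b"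
      using least[of w] w a b by (simp only: floor_of_int)
    moreover have "0 < a" "0 < b"
      using a b u(2) w(2) by simp_all
    ultimately show ?thesis
      using a b by simp
  qed
  with u show ?thesis by blast
qed

lemma coordinate_reduction_by_least:
  fixes S :: "(real^'n) set"
  assumes S: "additive_subgroup S" "\<forall>w\<in>S. w$j \<in> \<int>"
    and u: "u \<in> S" "0 < u$j" "\<forall>w\<in>S. 0 < w$j \<longrightarrow> u$j \<le> w$j"
    and x: "x \<in> S"
  shows "\<exists>q::int. x - of_int q *\<^sub>R u \<in> S \<and> (x - of_int q *\<^sub>R u)$j = 0"
proof -
  obtain d where d: "u$j = of_int d"
    using S(2) u(1) by (auto elim: Ints_cases)
  obtain m where m: "x$j = of_int m"
    using S(2) x by (auto elim: Ints_cases)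
  define q where "q = m div d"
  have rest: "x - of_int q *\<^sub>R u \<in> S"
    using S(1) x additive_subgroup_scaleR_int[OF S(1) u(1)] by (simp add: additive_subgroup_def)
  have rest_j: "(x - of_int q *\<^sub>R u)$j = of_int (m mod d)"
    using d m by (simp add: q_def minus_div_mult_eq_mod[symmetric] algebra_simps)
  have "m mod d = 0"
  proof (rule ccontr)
    assume "m mod d \<noteq> 0"
    moreover have "0 < d"
      using d u(2) by simp
    ultimately have "0 < m mod d" "m mod d < d"
      using pos_mod_sign[of d m] pos_mod_bound[of d m] by linarith+
    then have "u$j \<le> (x - of_int q *\<^sub>R u)$j"
      using u(3) rest rest_j \<open>0 < m mod d\<close> by (metis of_int_0_less_iff)
    then show False
      using \<open>m mod d < d\<close> rest_j d by simp
  qed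
  with rest rest_j show ?thesis by auto
qed

lemma independent_insert_nonzero_coordinate:
  fixes B :: "(real^'n) set"
  assumes "independent B" "\<forall>b\<in>B. b$j = 0" "u$j \<noteq> 0"
  shows "independent (insert u B)"
proof -
  have "span B \<subseteq> {x. x$j = 0}"
    using assms(2) by (intro span_minimal) (auto simp: subspace_def)
  then have "u \<notin> span B"
    using assms(3) by auto
  then show ?thesis
    using assms(1) by (simp add: independent_insert)
qed

lemma int_combinations_insert_least:
  fixes S :: "(real^'n) set"
  assumes S: "additive_subgroup S" "\<forall>w\<in>S. w$j \<in> \<int>"
    and u: "u \<in> S" "0 < u$j" "\<forall>w\<in>S. 0 < w$j \<longrightarrow> u$j \<le> w$j"
    and B: "finite B" "{v\<in>S. v$j = 0} = int_combinations B"
  shows "S = int_combinations (insert u B)"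
proof -
  have "u \<notin> B"
  proof
    assume "u \<in> B"
    then have "u \<in> {v\<in>S. v$j = 0}"
      using mem_int_combinations[OF B(1)] B(2) by simp
    with u(2) show False by simp
  qed
  have member: "x \<in> S \<longleftrightarrow> (\<exists>m v. x = of_int m *\<^sub>R u + v \<and> v \<in> int_combinations B)" for x
  proof
    assume "x \<in> S"
    then obtain q where "x - of_int q *\<^sub>R u \<in> S" "(x - of_int q *\<^sub>R u)$j = 0"
      using coordinate_reduction_by_least[OF S u] by blast
    then have "x - of_int q *\<^sub>R u \<in> int_combinations B"
      unfolding B(2)[symmetric] by simp
    then show "\<exists>m v. x = of_int m *\<^sub>R u + v \<and> v \<in> int_combinations B"
      by (intro exI[of _ q] exI[of _ "x - of_int q *\<^sub>R u"]) simp
  next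
    assume "\<exists>m v. x = of_int m *\<^sub>R u + v \<and> v \<in> int_combinations B"
    then obtain m v where "x = of_int m *\<^sub>R u + v" "v \<in> int_combinations B"
      by blast
    moreover from this(2) have "v \<in> S"
      unfolding B(2)[symmetric] by simp
    ultimately
    show "x \<in> S"
      using additive_subgroup_add[OF S(1) additive_subgroup_scaleR_int[OF S(1) u(1)]] by simp
  qed
  then show ?thesis
    unfolding int_combinations_insert[OF B(1) \<open>u \<notin> B\<close>] set_eq_iff mem_Collect_eq member ..
qed

lemma int_basis_from_coordinate_kernel:
  fixes S :: "(real^'n) set"
  assumes S: "additive_subgroup S" "\<forall>w\<in>S. w$j \<in> \<int>"
    and B0: "independent B0" "finite B0" "{v\<in>S. v$j = 0} = int_combinations B0"
  shows "\<exists>B. independent B \<and> finite B \<and> S = int_combinations B"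
proof (cases "\<forall>v\<in>S. v$j = 0")
  case True
  then have "S = {v\<in>S. v$j = 0}"
    by auto
  with B0 show ?thesis by auto
next
  case False
  then obtain w where w: "w \<in> S" "w$j \<noteq> 0"
    by blast
  define v where "v = (if 0 < w$j then w else - w)"
  have "v \<in> S" "0 < v$j"
    using w additive_subgroup_uminus[OF S(1)] by (auto simp: v_def)
  with S(2) obtain u where u: "u \<in> S" "0 < u$j" "\<forall>w\<in>S. 0 < w$j \<longrightarrow> u$j \<le> w$j"
    using least_positive_coordinate[of S j v] by blast
  have "S = int_combinations (insert u B0)"
    using int_combinations_insert_least[OF S u B0(2,3)] .
  moreover have "independent (insert u B0)"
  proof (rule independent_insert_nonzero_coordinate[OF B0(1)])
    show "\<forall>b\<in>B0. b$j = 0"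
      using mem_int_combinations[OF B0(2)] unfolding B0(3)[symmetric] by blast
    show "u$j \<noteq> 0"
      using u(2) by simp
  qed
  ultimately show ?thesis
    using B0(2) by blast
qed

lemma integer_subgroup_supported_on_is_lattice:
  fixes S :: "(real^'n) set"
  assumes "finite I" "additive_subgroup S" "\<forall>v\<in>S. \<forall>i. v$i \<in> \<int>"
    and "\<forall>v\<in>S. \<forall>i. i \<notin> I \<longrightarrow> v$i = 0"
  shows "\<exists>B. independent B \<and> finite B \<and> S = int_combinations B"
  using assms
proof (induction I arbitrary: S rule: finite_induct)
  case empty
  then have "S = {0}"
    unfolding additive_subgroup_def by (auto simp: vec_eq_iff)
  then show ?case
    by (intro exI[of _ "{}"]) (auto simp: int_combinations_def independent_empty)
next
  case (insert j I)
  define S0 where "S0 = {v\<in>S. v$j = 0}"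
  have "additive_subgroup S0"
    using insert.prems(1) unfolding additive_subgroup_def S0_def by auto
  moreover have "\<forall>v\<in>S0. \<forall>i. i \<notin> I \<longrightarrow> v$i = 0"
  proof (intro ballI allI impI)
    fix v i
    assume "v \<in> S0" "i \<notin> I"
    then show "v$i = 0"
      using insert.prems(3) unfolding S0_def by (cases "i = j") auto
  qed
  ultimately obtain B0 where "independent B0" "finite B0" "S0 = int_combinations B0"
    using insert.IH insert.prems(2) unfolding S0_def by blast
  then show ?case
    using int_basis_from_coordinate_kernel[OF insert.prems(1)] insert.prems(2)
    unfolding S0_def by blast
qed

lemma integer_subgroup_is_lattice:
  fixes S :: "(real^'n) set"
  assumes "additive_subgroup S" "\<forall>v\<in>S. \<forall>i. v$i \<in> \<int>"
  shows "is_lattice S"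
  using integer_subgroup_supported_on_is_lattice[of UNIV S] assms
  unfolding is_lattice_iff_int_combinations by simp

lemma additive_subgroup_if_add_closed_periodic:
  fixes S :: "(real^'n) set" and m :: nat
  assumes "0 \<in> S" "0 < m"
    and add: "\<And>x y. x \<in> S \<Longrightarrow> y \<in> S \<Longrightarrow> x + y \<in> S"
    and periodic: "\<And>x k. x \<in> S \<Longrightarrow> x + of_nat m *\<^sub>R (\<chi> i. of_int (k i)) \<in> S"
    and integer: "\<And>x i. x \<in> S \<Longrightarrow> x$i \<in> \<int>"
  shows "additive_subgroup S"
proof -
  have multiple: "of_nat n *\<^sub>R x \<in> S" if "x \<in> S" for x n
  proof (induction n)
    case (Suc n)
    then show ?case
      using add[OF that Suc.IH] by (simp add: scaleR_add_left)
  qed (simp add: assms(1))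
  have "- x \<in> S" if x: "x \<in> S" for x
  proof -
    have floor: "of_int \<lfloor>x$i\<rfloor> = x$i" for i
      using integer[OF x] by (auto elim: Ints_cases)
    have "- x = of_nat (m - 1) *\<^sub>R x + of_nat m *\<^sub>R (\<chi> i. of_int (- \<lfloor>x$i\<rfloor>))"
      using \<open>0 < m\<close> by (simp add: vec_eq_iff floor of_nat_diff algebra_simps)
    then show ?thesis
      using periodic[OF multiple[OF x], of "m - 1" "\<lambda>i. - \<lfloor>x$i\<rfloor>"] by simp
  qed
  then show ?thesis
    unfolding additive_subgroup_def using add assms(1) by (metis diff_conv_add_uminus)
qed

section \<open>Parities and carries of binary vectors\<close>

definition parity :: "bit^'n \<Rightarrow> bit" where
  "parity x = (\<Sum>i\<in>UNIV. x$i)"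

lemma parity_0 [simp]: "parity 0 = 0"
  by (simp add: parity_def)

lemma parity_add: "parity (x + y) = parity x + parity y"
  by (simp add: parity_def sum.distrib)

lemma parity_vec_mult: "parity (vec c * x) = c * parity x"
  by (simp add: parity_def sum_distrib_left)

lemma binary_inner_eq_parity: "binary_inner x y = parity (x * y)"
  by (simp add: binary_inner_def parity_def)

lemma self_orthogonal_parity_mult:
  assumes "self_orthogonal C" "x \<in> C" "y \<in> C"
  shows "parity (x * y) = 0"
  using assms unfolding self_orthogonal_def binary_dual_def binary_inner_eq_parity by blast

lemma bit_mult_self: "b * b = (b :: bit)"
  by (cases b) simp_all

lemma bit_add_self: "b + b = (0 :: bit)"
  by (cases b) simp_all

lemma bit_vec_add_self: "x + x = (0 :: bit^'n)"
  by (simp add: vec_eq_iff bit_add_self)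

lemma bit_vec_mult_self: "x * x = (x :: bit^'n)"
  by (simp add: vec_eq_iff bit_mult_self)

lemma self_orthogonal_parity:
  assumes "self_orthogonal C" "x \<in> C"
  shows "parity x = 0"
  using self_orthogonal_parity_mult[OF assms assms(2)] by (simp add: bit_vec_mult_self)

(* Over F_2 this is the majority of three bits, i.e. the carry of a full adder. *)
definition majority :: "'a::comm_semiring \<Rightarrow> 'a \<Rightarrow> 'a \<Rightarrow> 'a" where
  "majority a b c = a * b + a * c + b * c"

lemma majority_component [simp]: "majority a b c $ i = majority (a$i) (b$i) (c$i)"
  by (simp add: majority_def)

lemma parity_majority_vec:
  assumes "self_orthogonal C" "a \<in> C" "b \<in> C"
  shows "parity (majority a b (vec c)) = 0"
  using assms by (simp add: majority_def parity_add mult.commute[of _ "vec c"] parity_vec_mult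
      self_orthogonal_parity self_orthogonal_parity_mult)

lemma binary_linear_code_add:
  "binary_linear_code C \<Longrightarrow> a \<in> C \<Longrightarrow> b \<in> C \<Longrightarrow> a + b \<in> C"
  unfolding binary_linear_code_def by (metis vector_smult_lid)

lemma binary_linear_code_vec:
  "binary_linear_code C \<Longrightarrow> 1 \<in> C \<Longrightarrow> vec c \<in> C"
  unfolding binary_linear_code_def by (metis add.right_neutral vec_1 vec_cmul mult.right_neutral)

lemma code_C_eq: "code_C C2 = {(vec (parity x), a, x) | a x. a \<in> C2}"
proof -
  have weights: "even_weight = {x. parity x = 0}" "odd_weight = {x. parity x = 1}"
    by (simp_all add: even_weight_def odd_weight_def parity_def)
  have all_ones: "(\<chi> i. 1) = (vec 1 :: bit^'n)"
    by (simp add: one_vec_def)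
  have "parity x = 0 \<or> parity x = 1" for x :: "bit^'n"
    by (cases "parity x") simp_all
  then show ?thesis
    unfolding code_C_def weights all_ones by (auto simp flip: vec_0)
qed

section \<open>Octal expansions and the set Gamma\<close>

lemma of_bit_full_adder:
  "(of_bit a + of_bit b + of_bit c :: 'a::comm_semiring_1) = of_bit (a + b + c) + 2 * of_bit (majority a b c)"
  by (cases a; cases b; cases c) (simp_all add: majority_def)

definition octal :: "bit \<Rightarrow> bit \<Rightarrow> bit \<Rightarrow> int \<Rightarrow> real" where
  "octal c1 c2 c3 z = of_bit c1 + 2 * of_bit c2 + 4 * of_bit c3 + 8 * of_int z"

lemma octal_add:
  fixes p q a b x y :: bit
  defines "m \<equiv> majority a b (p * q)"
  shows "octal p a x z + octal q b y w
    = octal (p + q) (a + b + p * q) (x + y + m) (z + w + of_bit (majority x y m))"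
proof -
  have half_adder: "of_bit p + of_bit q = (of_bit (p + q) + 2 * of_bit (p * q) :: real)"
    using of_bit_full_adder[of p q 0] by (simp add: majority_def)
  have "octal p a x z + octal q b y w
    = (of_bit p + of_bit q) + 2 * (of_bit a + of_bit b) + 4 * (of_bit x + of_bit y) + 8 * of_int (z + w)"
    by (simp add: octal_def algebra_simps)
  also have "\<dots> = 2 * (of_bit a + of_bit b + of_bit (p * q)) + of_bit (p + q) + 4 * (of_bit x + of_bit y)
      + 8 * of_int (z + w)"
    unfolding half_adder by (simp add: algebra_simps)
  also have "\<dots> = of_bit (p + q) + 2 * of_bit (a + b + p * q) + 4 * (of_bit x + of_bit y + of_bit m)
      + 8 * of_int (z + w)"
    unfolding of_bit_full_adder[of a b "p * q"] m_def by (simp add: algebra_simps)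
  also have "\<dots> = octal (p + q) (a + b + p * q) (x + y + m) (z + w + of_bit (majority x y m))"
    unfolding of_bit_full_adder[of x y m] by (simp add: octal_def algebra_simps)
  finally show ?thesis .
qed

lemma octal_eq_iff:
  "octal b1 b2 b3 z = octal c1 c2 c3 w \<longleftrightarrow> b1 = c1 \<and> b2 = c2 \<and> b3 = c3 \<and> z = w"
proof -
  have "octal b1 b2 b3 z = octal c1 c2 c3 w
    \<longleftrightarrow> (of_bit b1 + 2 * of_bit b2 + 4 * of_bit b3 + 8 * z :: int)
      = of_bit c1 + 2 * of_bit c2 + 4 * of_bit c3 + 8 * w"
    unfolding octal_def of_int_eq_iff[where 'a=real, symmetric] by simp
  also have "\<dots> \<longleftrightarrow> b1 = c1 \<and> b2 = c2 \<and> b3 = c3 \<and> z = w"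
    by (cases b1; cases b2; cases b3; cases c1; cases c2; cases c3) (simp_all, presburger+)
  finally show ?thesis .
qed

definition octal_vector :: "bit^'n \<Rightarrow> bit^'n \<Rightarrow> bit^'n \<Rightarrow> int^'n \<Rightarrow> real^'n" where
  "octal_vector c1 c2 c3 z = (\<chi> i. octal (c1$i) (c2$i) (c3$i) (z$i))"

lemma Gamma_Cstar_eq: "Gamma_Cstar C = {octal_vector c1 c2 c3 z | c1 c2 c3 z. (c1, c2, c3) \<in> C}"
  unfolding Gamma_Cstar_def octal_vector_def octal_def by simp

lemma octal_vector_eq_iff:
  "octal_vector c1 c2 c3 z = octal_vector d1 d2 d3 w \<longleftrightarrow> c1 = d1 \<and> c2 = d2 \<and> c3 = d3 \<and> z = w"
  by (auto simp: octal_vector_def vec_eq_iff octal_eq_iff)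

lemma octal_vector_add:
  fixes p q a b x y :: "bit^'n"
  defines "m \<equiv> majority a b (p * q)"
  shows "octal_vector p a x z + octal_vector q b y w
    = octal_vector (p + q) (a + b + p * q) (x + y + m) (z + w + (\<chi> i. of_bit (majority x y m $ i)))"
  by (simp add: octal_vector_def vec_eq_iff m_def octal_add)

lemma octal_vector_add_multiple_8:
  "octal_vector c1 c2 c3 z + 8 *\<^sub>R (\<chi> i. of_int (k i)) = octal_vector c1 c2 c3 (z + (\<chi> i. k i))"
  by (simp add: octal_vector_def octal_def vec_eq_iff algebra_simps)

lemma Gamma_Cstar_integer: "v \<in> Gamma_Cstar C \<Longrightarrow> v$i \<in> \<int>"
  unfolding Gamma_Cstar_def by auto

lemma Gamma_Cstar_code_C_eq:
  "Gamma_Cstar (code_C C2) = {octal_vector (vec (parity x)) a x z | a x z. a \<in> C2}"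
  unfolding Gamma_Cstar_eq code_C_eq by blast

lemma octal_vector_mem_Gamma_Cstar_code_C:
  "a \<in> C2 \<Longrightarrow> octal_vector (vec (parity x)) a x z \<in> Gamma_Cstar (code_C C2)"
  unfolding Gamma_Cstar_code_C_eq by blast

lemma Gamma_Cstar_code_C_cases:
  assumes "v \<in> Gamma_Cstar (code_C C2)"
  obtains a x z where "a \<in> C2" "v = octal_vector (vec (parity x)) a x z"
  using assms unfolding Gamma_Cstar_code_C_eq by blast

lemma Gamma_Cstar_code_C_add_closed:
  assumes lin: "binary_linear_code C2" and so: "self_orthogonal C2" and ones: "1 \<in> C2"
    and "u \<in> Gamma_Cstar (code_C C2)" "v \<in> Gamma_Cstar (code_C C2)"
  shows "u + v \<in> Gamma_Cstar (code_C C2)"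
proof -
  obtain a x z where a: "a \<in> C2" and u: "u = octal_vector (vec (parity x)) a x z"
    using assms(4) by (rule Gamma_Cstar_code_C_cases)
  obtain b y w where b: "b \<in> C2" and v: "v = octal_vector (vec (parity y)) b y w"
    using assms(5) by (rule Gamma_Cstar_code_C_cases)
  define c where "c = parity x * parity y"
  have carry: "vec (parity x) * vec (parity y) = (vec c :: bit^'n)"
    by (simp add: c_def vec_eq_iff)
  obtain z' where sum: "u + v = octal_vector (vec (parity x + parity y))
      (a + b + vec c) (x + y + majority a b (vec c)) z'"
    unfolding u v octal_vector_add vec_add carry by blast
  have "a + b + vec c \<in> C2"
    using a b binary_linear_code_add[OF lin] binary_linear_code_vec[OF lin ones] by blast
  moreover have "parity (x + y + majority a b (vec c)) = parity x + parity y"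
    by (simp add: parity_add parity_majority_vec[OF so a b])
  ultimately show ?thesis
    unfolding sum using octal_vector_mem_Gamma_Cstar_code_C by metis
qed

lemma additive_subgroup_Gamma_Cstar_code_C:
  assumes "binary_linear_code C2" "self_orthogonal C2" "1 \<in> C2"
  shows "additive_subgroup (Gamma_Cstar (code_C C2))"
proof (rule additive_subgroup_if_add_closed_periodic[where m = 8])
  have "0 = octal_vector (vec (parity 0)) 0 0 (0 :: int^'n)"
    by (simp add: octal_vector_def octal_def vec_eq_iff)
  moreover have "0 \<in> C2"
    using assms(1) unfolding binary_linear_code_def by blast
  ultimately show "0 \<in> Gamma_Cstar (code_C C2)"
    using octal_vector_mem_Gamma_Cstar_code_C by metis
next
  fix v k
  assume "v \<in> Gamma_Cstar (code_C C2)"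
  then obtain a x z where "a \<in> C2" "v = octal_vector (vec (parity x)) a x z"
    by (rule Gamma_Cstar_code_C_cases)
  then show "v + of_nat 8 *\<^sub>R (\<chi> i. of_int (k i)) \<in> Gamma_Cstar (code_C C2)"
    using octal_vector_mem_Gamma_Cstar_code_C by (simp add: octal_vector_add_multiple_8)
qed (use Gamma_Cstar_code_C_add_closed[OF assms] Gamma_Cstar_integer in auto)

lemma all_ones_mem_if_lattice:
  fixes C2 :: "(bit^'n) set"
  assumes lin: "binary_linear_code C2" and lattice: "is_lattice (Gamma_Cstar (code_C C2))"
  shows "1 \<in> C2"
proof -
  obtain i0 :: 'n where True by blast
  define e :: "bit^'n" where "e = axis i0 1"
  have "parity e = 1"
    by (simp add: e_def parity_def axis_def)
  moreover have "0 \<in> C2"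
    using lin unfolding binary_linear_code_def by blast
  ultimately have "octal_vector 1 0 e 0 \<in> Gamma_Cstar (code_C C2)"
    using octal_vector_mem_Gamma_Cstar_code_C[of 0 C2 e 0] by simp
  moreover have "octal_vector 1 0 e 0 + octal_vector 1 0 e 0 = octal_vector 0 1 0 (\<chi> i. of_bit (e$i))"
    unfolding octal_vector_add bit_vec_add_self by (simp add: majority_def bit_vec_mult_self)
  ultimately have "octal_vector 0 1 0 (\<chi> i. of_bit (e$i)) \<in> Gamma_Cstar (code_C C2)"
    using lattice_add_closed[OF lattice] by metis
  then obtain a x z where "a \<in> C2" "octal_vector 0 1 0 (\<chi> i. of_bit (e$i)) = octal_vector (vec (parity x)) a x z"
    by (rule Gamma_Cstar_code_C_cases)
  then show ?thesis
    unfolding octal_vector_eq_iff by simp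
qed

lemma self_orthogonal_if_lattice:
  fixes C2 :: "(bit^'n) set"
  assumes lattice: "is_lattice (Gamma_Cstar (code_C C2))"
  shows "self_orthogonal C2"
  unfolding self_orthogonal_def binary_dual_def
proof (intro subsetI CollectI ballI)
  fix a b
  assume "a \<in> C2" "b \<in> C2"
  then have "octal_vector 0 a 0 0 + octal_vector 0 b 0 0 \<in> Gamma_Cstar (code_C C2)"
    using lattice_add_closed[OF lattice] octal_vector_mem_Gamma_Cstar_code_C[of _ C2 0 0] by simp
  moreover have "octal_vector 0 a 0 0 + octal_vector 0 b 0 0 = octal_vector 0 (a + b) (a * b) 0"
    unfolding octal_vector_add by (simp add: majority_def flip: zero_vec_def)
  ultimately have "octal_vector 0 (a + b) (a * b) 0 \<in> Gamma_Cstar (code_C C2)"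
    by simp
  then obtain a' x z where "octal_vector 0 (a + b) (a * b) 0 = octal_vector (vec (parity x)) a' x z"
    by (rule Gamma_Cstar_code_C_cases)
  then have "parity (a * b) = 0"
    unfolding octal_vector_eq_iff by (metis vec_0 vec_inj)
  then show "binary_inner a b = 0"
    by (simp add: binary_inner_eq_parity)
qed

theorem theorem2:
  fixes C2 :: "(bit^'n) set"
  assumes "binary_linear_code C2"
  shows "is_lattice (Gamma_Cstar (code_C C2)) \<longleftrightarrow> self_orthogonal C2 \<and> (\<chi> i. 1) \<in> C2"
proof -
  have all_ones: "(\<chi> i. 1) = (1 :: bit^'n)"
    by (simp add: one_vec_def)
  show ?thesis
    unfolding all_ones
  proof
    assume "is_lattice (Gamma_Cstar (code_C C2))"
    then show "self_orthogonal C2 \<and> 1 \<in> C2"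
      using self_orthogonal_if_lattice all_ones_mem_if_lattice[OF assms] by blast
  next
    assume "self_orthogonal C2 \<and> 1 \<in> C2"
    then have "additive_subgroup (Gamma_Cstar (code_C C2))"
      using additive_subgroup_Gamma_Cstar_code_C[OF assms] by blast
    then show "is_lattice (Gamma_Cstar (code_C C2))"
      using integer_subgroup_is_lattice Gamma_Cstar_integer by blast
  qed
qed

end
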